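(* Let $\langle E,\rightarrow\rangle$ be a computation in which some events are designated as local checkpoints, let $b$ be the conjunctive predicate that holds at a consistent cut iff, for every process, the last event of that process in the cut is a local checkpoint, and let $S$ be the slice of $\langle E,\rightarrow\rangle$ with respect to $b$. A set $X$ of local checkpoints can belong to the same consistent global snapshot (i.e., there is a non-trivial consistent cut of $\langle E,\rightarrow\rangle$ satisfying $b$ whose frontier contains $X$) if and only if every pair of (not necessarily distinct) elements of $X$ is consistent in $S$.
   Context: A computation is a directed graph $\langle E, \rightarrow\rangle$ whose vertices (events) are partitioned among processes, events on each process totally ordered, each process having an initial event (first) and final event (last), whose path relation contains Lamport's happened-before relation, with all initial events in one strongly connected component and all final events in one. $\top$ is the set of final events and $\mathrm{succ}(e)$ the successor of $e$ on its process. A vertex subset $C$ of a directed graph is a consistent cut if for every edge $(u,v)$, $v\in C$ implies $u\in C$. The frontier of a consistent cut $C$ is $\{e\in C \mid e\notin\top \Rightarrow \mathrm{succ}(e)\notin C\}$. Two events (possibly equal) are consistent in a graph if both belong to the frontier of some consistent cut of that graph. A conjunctive predicate is a conjunction of local predicates, each depending on one process and evaluated at the last event of that process in the cut. The slice with respect to $b$ is a directed graph on $E$ whose consistent cuts include every consistent cut of the computation satisfying $b$ and which has the fewest consistent cuts among all such graphs. *)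

theory Defs
  imports Main
begin

text \<open>A computation is given by: a finite event set E, the edge relation R of the
directed graph on E, a set P of processes, the map proc assigning each event its
process, the strict process order ord (e before f on the same process), and the
message relation M (used only to form Lamport's happened-before relation).\<close>

definition happened_before :: "('e \<times> 'e) set \<Rightarrow> ('e \<times> 'e) set \<Rightarrow> ('e \<times> 'e) set" where
  "happened_before ord M = (ord \<union> M)\<^sup>+"

definition initial_ev :: "'e set \<Rightarrow> ('e \<times> 'e) set \<Rightarrow> 'e \<Rightarrow> bool" where
  "initial_ev E ord e \<longleftrightarrow> e \<in> E \<and> \<not> (\<exists>f. (f, e) \<in> ord)"

definition final_ev :: "'e set \<Rightarrow> ('e \<times> 'e) set \<Rightarrow> 'e \<Rightarrow> bool" where
  "final_ev E ord e \<longleftrightarrow> e \<in> E \<and> \<not> (\<exists>f. (e, f) \<in> ord)"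

definition Top :: "'e set \<Rightarrow> ('e \<times> 'e) set \<Rightarrow> 'e set" where
  "Top E ord = {e. final_ev E ord e}"

definition succ_ev :: "('e \<times> 'e) set \<Rightarrow> 'e \<Rightarrow> 'e" where
  "succ_ev ord e = (THE f. (e, f) \<in> ord \<and> \<not> (\<exists>g. (e, g) \<in> ord \<and> (g, f) \<in> ord))"

definition computation ::
  "'e set \<Rightarrow> ('e \<times> 'e) set \<Rightarrow> 'p set \<Rightarrow> ('e \<Rightarrow> 'p) \<Rightarrow> ('e \<times> 'e) set \<Rightarrow> ('e \<times> 'e) set \<Rightarrow> bool" where
  "computation E R P proc ord M \<longleftrightarrow>
     finite E \<and> R \<subseteq> E \<times> E \<and> proc ` E = P \<and>
     ord \<subseteq> E \<times> E \<and> M \<subseteq> E \<times> E \<and>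
     (\<forall>e f. (e, f) \<in> ord \<longrightarrow> proc e = proc f) \<and>
     irrefl ord \<and> trans ord \<and>
     (\<forall>e\<in>E. \<forall>f\<in>E. proc e = proc f \<longrightarrow> e = f \<or> (e, f) \<in> ord \<or> (f, e) \<in> ord) \<and>
     happened_before ord M \<subseteq> R\<^sup>* \<and>
     (\<forall>e f. initial_ev E ord e \<and> initial_ev E ord f \<longrightarrow> (e, f) \<in> R\<^sup>*) \<and>
     (\<forall>e f. final_ev E ord e \<and> final_ev E ord f \<longrightarrow> (e, f) \<in> R\<^sup>*)"

definition consistent_cut :: "'e set \<Rightarrow> ('e \<times> 'e) set \<Rightarrow> 'e set \<Rightarrow> bool" where
  "consistent_cut E G C \<longleftrightarrow> C \<subseteq> E \<and> (\<forall>u v. (u, v) \<in> G \<longrightarrow> v \<in> C \<longrightarrow> u \<in> C)"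

definition frontier :: "'e set \<Rightarrow> ('e \<times> 'e) set \<Rightarrow> 'e set \<Rightarrow> 'e set" where
  "frontier E ord C = {e \<in> C. e \<notin> Top E ord \<longrightarrow> succ_ev ord e \<notin> C}"

definition consistent_in ::
  "'e set \<Rightarrow> ('e \<times> 'e) set \<Rightarrow> ('e \<times> 'e) set \<Rightarrow> 'e \<Rightarrow> 'e \<Rightarrow> bool" where
  "consistent_in E ord G e f \<longleftrightarrow>
     (\<exists>C. consistent_cut E G C \<and> e \<in> frontier E ord C \<and> f \<in> frontier E ord C)"

definition ckpt_pred ::
  "'p set \<Rightarrow> ('e \<Rightarrow> 'p) \<Rightarrow> ('e \<times> 'e) set \<Rightarrow> 'e set \<Rightarrow> 'e set \<Rightarrow> bool" where
  "ckpt_pred P proc ord LC C \<longleftrightarrow>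
     (\<forall>p\<in>P. \<exists>e\<in>C. proc e = p \<and> (\<forall>f\<in>C. proc f = p \<longrightarrow> f = e \<or> (f, e) \<in> ord) \<and> e \<in> LC)"

definition is_slice ::
  "'e set \<Rightarrow> ('e \<times> 'e) set \<Rightarrow> ('e set \<Rightarrow> bool) \<Rightarrow> ('e \<times> 'e) set \<Rightarrow> bool" where
  "is_slice E R b S \<longleftrightarrow>
     S \<subseteq> E \<times> E \<and>
     (\<forall>C. consistent_cut E R C \<and> b C \<longrightarrow> consistent_cut E S C) \<and>
     (\<forall>S'. S' \<subseteq> E \<times> E \<and> (\<forall>C. consistent_cut E R C \<and> b C \<longrightarrow> consistent_cut E S' C) \<longrightarrow>
        card {C. consistent_cut E S C} \<le> card {C. consistent_cut E S' C})"

end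

theory Submission
  imports Defs
begin

text \<open>The checkpoint predicate is regular: the consistent cuts satisfying it are closed under
union and intersection, because on every process the last event of \<open>C \<union> D\<close> (resp.
\<open>C \<inter> D\<close>) is the later (resp. earlier) of the last events of \<open>C\<close> and \<open>D\<close>. Hence these cuts,
together with the trivial cuts \<open>{}\<close> and \<open>E\<close>, form a finite lattice of sets, which is exactly
the set of consistent cuts of the graph having an edge \<open>(u, v)\<close> whenever every member
containing \<open>v\<close> contains \<open>u\<close>; by minimality, these are precisely the consistent cuts of the
slice. If every pair \<open>x, y \<in> X\<close> is consistent in the slice, there is a checkpoint cut
\<open>C\<^sub>x\<^sub>y\<close> containing \<open>x\<close> but not the successor of \<open>y\<close>; then \<open>\<Union>\<^sub>x \<Inter>\<^sub>y C\<^sub>x\<^sub>y\<close> is a checkpoint cut whose frontier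
contains all of \<open>X\<close>.\<close>

lemma finite_Inter_mem:
  assumes "finite F" "F \<noteq> {}" "F \<subseteq> L" "\<And>A B. A \<in> L \<Longrightarrow> B \<in> L \<Longrightarrow> A \<inter> B \<in> L"
  shows "\<Inter>F \<in> L"
  using assms(1-3) by (induction F rule: finite_ne_induct) (auto intro: assms(4))

lemma finite_Union_mem:
  assumes "finite F" "F \<noteq> {}" "F \<subseteq> L" "\<And>A B. A \<in> L \<Longrightarrow> B \<in> L \<Longrightarrow> A \<union> B \<in> L"
  shows "\<Union>F \<in> L"
  using assms(1-3) by (induction F rule: finite_ne_induct) (auto intro: assms(4))

lemma Union_Inter_separates:
  assumes "finite X" "X \<noteq> {}"
    and Int: "\<And>A B. A \<in> L \<Longrightarrow> B \<in> L \<Longrightarrow> A \<inter> B \<in> L"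
    and Un: "\<And>A B. A \<in> L \<Longrightarrow> B \<in> L \<Longrightarrow> A \<union> B \<in> L"
    and sep: "\<And>x y. x \<in> X \<Longrightarrow> y \<in> X \<Longrightarrow> \<exists>C\<in>L. x \<in> C \<and> s y \<notin> C"
  shows "\<exists>C\<in>L. X \<subseteq> C \<and> (\<forall>y\<in>X. s y \<notin> C)"
proof -
  obtain Sep where Sep: "\<And>x y. x \<in> X \<Longrightarrow> y \<in> X \<Longrightarrow> Sep x y \<in> L \<and> x \<in> Sep x y \<and> s y \<notin> Sep x y"
    using sep by metis
  define C where "C = (\<Union>x\<in>X. \<Inter>y\<in>X. Sep x y)"
  have "(\<Inter>y\<in>X. Sep x y) \<in> L" if "x \<in> X" for x
    using assms(1,2) Sep that by (intro finite_Inter_mem[OF _ _ _ Int]) auto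
  then have "C \<in> L"
    unfolding C_def using assms(1,2) by (intro finite_Union_mem[OF _ _ _ Un]) auto
  moreover have "X \<subseteq> C" "\<forall>y\<in>X. s y \<notin> C"
    unfolding C_def using Sep by blast+
  ultimately show ?thesis by blast
qed

lemma consistent_cut_rtrancl_closed:
  assumes "consistent_cut E G C" "(a, b) \<in> G\<^sup>*" "b \<in> C"
  shows "a \<in> C"
  using assms(2,3)
proof (induction rule: converse_rtrancl_induct)
  case (step y z)
  then show ?case using assms(1) unfolding consistent_cut_def by blast
qed

lemma consistent_cut_Int:
  "consistent_cut E G C \<Longrightarrow> consistent_cut E G D \<Longrightarrow> consistent_cut E G (C \<inter> D)"
  unfolding consistent_cut_def by blast

lemma consistent_cut_Un:
  "consistent_cut E G C \<Longrightarrow> consistent_cut E G D \<Longrightarrow> consistent_cut E G (C \<union> D)"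
  unfolding consistent_cut_def by blast

lemma consistent_cut_trivial:
  assumes "G \<subseteq> E \<times> E"
  shows "consistent_cut E G {}" "consistent_cut E G E"
  using assms unfolding consistent_cut_def by auto

text \<open>Birkhoff's representation: a down-set \<open>D\<close> of the graph \<open>G\<close> below is the union of the
least members \<open>\<Inter>{C \<in> L. v \<in> C}\<close> of \<open>L\<close> over \<open>v \<in> D\<close>.\<close>

lemma lattice_of_sets_is_consistent_cuts:
  assumes "finite E" "L \<subseteq> Pow E" "{} \<in> L" "E \<in> L"
    and Int: "\<And>A B. A \<in> L \<Longrightarrow> B \<in> L \<Longrightarrow> A \<inter> B \<in> L"
    and Un: "\<And>A B. A \<in> L \<Longrightarrow> B \<in> L \<Longrightarrow> A \<union> B \<in> L"
  shows "\<exists>G \<subseteq> E \<times> E. {C. consistent_cut E G C} = L"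
proof -
  define G where "G = {(u, v). u \<in> E \<and> v \<in> E \<and> (\<forall>C\<in>L. v \<in> C \<longrightarrow> u \<in> C)}"
  have "D \<in> L" if D: "consistent_cut E G D" for D
  proof (cases "D = {}")
    case False
    define least where "least v = \<Inter>{C \<in> L. v \<in> C}" for v
    have DE: "D \<subseteq> E" using D unfolding consistent_cut_def by auto
    have "finite L" using assms(1,2) by (meson finite_Pow_iff finite_subset)
    then have least_mem: "least v \<in> L" if "v \<in> E" for v
      unfolding least_def using that \<open>E \<in> L\<close> by (intro finite_Inter_mem[OF _ _ _ Int]) auto
    have "least v \<subseteq> D" if "v \<in> D" for v
    proof
      fix u assume "u \<in> least v"
      then have "(u, v) \<in> G" using that DE \<open>E \<in> L\<close> unfolding least_def G_def by blast
      then show "u \<in> D" using D that unfolding consistent_cut_def by blast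
    qed
    then have "D = (\<Union>v\<in>D. least v)" unfolding least_def by blast
    also have "\<dots> \<in> L"
      using False DE least_mem finite_subset[OF DE assms(1)]
      by (intro finite_Union_mem[OF _ _ _ Un]) auto
    finally show ?thesis .
  qed (use assms(3) in simp)
  moreover have "consistent_cut E G C" if "C \<in> L" for C
    using that assms(2) unfolding consistent_cut_def G_def by auto
  ultimately have "{C. consistent_cut E G C} = L" by blast
  moreover have "G \<subseteq> E \<times> E" unfolding G_def by auto
  ultimately show ?thesis by blast
qed

lemma is_slice_consistent_cut:
  assumes "is_slice E R b S" "consistent_cut E R C" "b C"
  shows "consistent_cut E S C"
  using assms unfolding is_slice_def by simp

lemma slice_consistent_cuts:
  assumes "finite E" "is_slice E R b S"
    and Int: "\<And>C D. consistent_cut E R C \<Longrightarrow> b C \<Longrightarrow> consistent_cut E R D \<Longrightarrow> b D \<Longrightarrow> b (C \<inter> D)"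
    and Un: "\<And>C D. consistent_cut E R C \<Longrightarrow> b C \<Longrightarrow> consistent_cut E R D \<Longrightarrow> b D \<Longrightarrow> b (C \<union> D)"
  shows "{C. consistent_cut E S C} = {C. consistent_cut E R C \<and> b C} \<union> {{}, E}"
proof -
  define L where "L = {C. consistent_cut E R C \<and> b C} \<union> {{}, E}"
  have "L \<subseteq> Pow E" unfolding L_def consistent_cut_def by auto
  have "A \<inter> B \<in> L" "A \<union> B \<in> L" if "A \<in> L" "B \<in> L" for A B
  proof -
    have "A \<subseteq> E" "B \<subseteq> E" using that \<open>L \<subseteq> Pow E\<close> by auto
    then show "A \<inter> B \<in> L" "A \<union> B \<in> L"
      using that Int Un consistent_cut_Int consistent_cut_Un unfolding L_def
      by (auto simp: Int_absorb1 Int_absorb2 Un_absorb1 Un_absorb2)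
  qed
  with assms(1) \<open>L \<subseteq> Pow E\<close> obtain G where G: "G \<subseteq> E \<times> E" "{C. consistent_cut E G C} = L"
    using lattice_of_sets_is_consistent_cuts[of E L] unfolding L_def by auto
  have SE: "S \<subseteq> E \<times> E" and minimal: "\<And>S'. S' \<subseteq> E \<times> E \<Longrightarrow> \<forall>C. consistent_cut E R C \<and> b C \<longrightarrow> consistent_cut E S' C \<Longrightarrow>
        card {C. consistent_cut E S C} \<le> card {C. consistent_cut E S' C}"
    using assms(2) unfolding is_slice_def by blast+
  have "L \<subseteq> {C. consistent_cut E S C}"
    using is_slice_consistent_cut[OF assms(2)] consistent_cut_trivial[OF SE] unfolding L_def by auto
  moreover have "finite {C. consistent_cut E S C}"
    using assms(1) by (auto simp: consistent_cut_def intro: finite_subset[of _ "Pow E"])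
  moreover have "card {C. consistent_cut E S C} \<le> card L"
    using minimal[OF G(1)] G(2) unfolding L_def by (metis (no_types, lifting) Un_iff mem_Collect_eq)
  ultimately have "L = {C. consistent_cut E S C}"
    using card_seteq by blast
  then show ?thesis unfolding L_def ..
qed

lemma computation_order:
  assumes "computation E R P proc ord M"
  shows "finite E" "ord \<subseteq> E \<times> E" "irrefl ord" "trans ord"
  using assms unfolding computation_def by simp_all

lemma computation_ord_total:
  assumes "computation E R P proc ord M" "e \<in> E" "f \<in> E" "proc e = proc f"
  shows "e = f \<or> (e, f) \<in> ord \<or> (f, e) \<in> ord"
  using assms unfolding computation_def by simp

lemma computation_ord_cut_closed:
  assumes "computation E R P proc ord M" "consistent_cut E R C" "(a, b) \<in> ord" "b \<in> C"
  shows "a \<in> C"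
proof -
  have "(a, b) \<in> happened_before ord M" unfolding happened_before_def using assms(3) by auto
  then have "(a, b) \<in> R\<^sup>*" using assms(1) unfolding computation_def by blast
  then show ?thesis using consistent_cut_rtrancl_closed assms(2,4) by metis
qed

lemma succ_ev_in_ord:
  assumes "finite ord" "irrefl ord" "trans ord" "(x, f) \<in> ord"
    and total: "\<And>g h. (x, g) \<in> ord \<Longrightarrow> (x, h) \<in> ord \<Longrightarrow> g = h \<or> (g, h) \<in> ord \<or> (h, g) \<in> ord"
  shows "(x, succ_ev ord x) \<in> ord"
proof -
  have "acyclic ord"
    using assms(2,3) unfolding acyclic_def irrefl_def by (simp add: trancl_id)
  then have "wf ord"
    using assms(1) by (rule finite_acyclic_wf[rotated])
  then obtain m where m: "(x, m) \<in> ord" and min: "\<And>g. (g, m) \<in> ord \<Longrightarrow> (x, g) \<notin> ord"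
    using wfE_min[of ord f "{g. (x, g) \<in> ord}"] assms(4) by auto
  have "\<exists>!m. (x, m) \<in> ord \<and> \<not> (\<exists>g. (x, g) \<in> ord \<and> (g, m) \<in> ord)"
  proof (rule ex1I[of _ m])
    show "(x, m) \<in> ord \<and> \<not> (\<exists>g. (x, g) \<in> ord \<and> (g, m) \<in> ord)" using m min by blast
  next
    fix m' assume "(x, m') \<in> ord \<and> \<not> (\<exists>g. (x, g) \<in> ord \<and> (g, m') \<in> ord)"
    then have "(x, m') \<in> ord" "(m, m') \<notin> ord" using m by blast+
    moreover have "(m', m) \<notin> ord" using min calculation(1) by blast
    ultimately show "m' = m" using total[OF _ m] by blast
  qed
  from theI'[OF this] show ?thesis unfolding succ_ev_def by blast
qed

lemma computation_succ_ev:
  assumes c: "computation E R P proc ord M" and "x \<in> E" "x \<notin> Top E ord"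
  shows "(x, succ_ev ord x) \<in> ord"
proof -
  obtain f where "(x, f) \<in> ord" using assms(2,3) unfolding Top_def final_ev_def by auto
  moreover have "finite ord"
    using computation_order[OF c] by (meson finite_SigmaI finite_subset)
  moreover have "g = h \<or> (g, h) \<in> ord \<or> (h, g) \<in> ord" if "(x, g) \<in> ord" "(x, h) \<in> ord" for g h
  proof -
    have "proc g = proc h" using c that unfolding computation_def by metis
    moreover have "g \<in> E" "h \<in> E" using computation_order(2)[OF c] that by auto
    ultimately show ?thesis using computation_ord_total[OF c] by blast
  qed
  ultimately show ?thesis
    using computation_order(3,4)[OF c] succ_ev_in_ord by metis
qed

lemma ckpt_predE:
  assumes "ckpt_pred P proc ord LC C" "p \<in> P"
  obtains e where "e \<in> C" "proc e = p" "\<forall>f\<in>C. proc f = p \<longrightarrow> f = e \<or> (f, e) \<in> ord" "e \<in> LC"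
  using assms unfolding ckpt_pred_def by blast

lemma ckpt_pred_Un:
  assumes c: "computation E R P proc ord M"
    and "C \<subseteq> E" "ckpt_pred P proc ord LC C"
    and "D \<subseteq> E" "ckpt_pred P proc ord LC D"
  shows "ckpt_pred P proc ord LC (C \<union> D)"
  unfolding ckpt_pred_def
proof
  fix p assume "p \<in> P"
  obtain e1 where e1: "e1 \<in> C" "proc e1 = p" "\<forall>f\<in>C. proc f = p \<longrightarrow> f = e1 \<or> (f, e1) \<in> ord" "e1 \<in> LC"
    using assms(3) \<open>p \<in> P\<close> by (rule ckpt_predE)
  obtain e2 where e2: "e2 \<in> D" "proc e2 = p" "\<forall>f\<in>D. proc f = p \<longrightarrow> f = e2 \<or> (f, e2) \<in> ord" "e2 \<in> LC"
    using assms(5) \<open>p \<in> P\<close> by (rule ckpt_predE)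
  have "trans ord" using computation_order(4)[OF c] .
  have "e1 \<in> E" "e2 \<in> E" using e1(1) e2(1) assms(2,4) by blast+
  then consider "e1 = e2" | "(e1, e2) \<in> ord" | "(e2, e1) \<in> ord"
    using computation_ord_total[OF c] e1 e2 by metis
  then show "\<exists>e\<in>C \<union> D. proc e = p \<and> (\<forall>f\<in>C \<union> D. proc f = p \<longrightarrow> f = e \<or> (f, e) \<in> ord) \<and> e \<in> LC"
  proof cases
    case 1
    then show ?thesis using e1 e2 by blast
  next
    case 2
    then show ?thesis using e1 e2 \<open>trans ord\<close> unfolding trans_def by blast
  next
    case 3
    then show ?thesis using e1 e2 \<open>trans ord\<close> unfolding trans_def by blast
  qed
qed

lemma ckpt_pred_Int:
  assumes c: "computation E R P proc ord M"
    and "consistent_cut E R C" "ckpt_pred P proc ord LC C"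
    and "consistent_cut E R D" "ckpt_pred P proc ord LC D"
  shows "ckpt_pred P proc ord LC (C \<inter> D)"
  unfolding ckpt_pred_def
proof
  fix p assume "p \<in> P"
  obtain e1 where e1: "e1 \<in> C" "proc e1 = p" "\<forall>f\<in>C. proc f = p \<longrightarrow> f = e1 \<or> (f, e1) \<in> ord" "e1 \<in> LC"
    using assms(3) \<open>p \<in> P\<close> by (rule ckpt_predE)
  obtain e2 where e2: "e2 \<in> D" "proc e2 = p" "\<forall>f\<in>D. proc f = p \<longrightarrow> f = e2 \<or> (f, e2) \<in> ord" "e2 \<in> LC"
    using assms(5) \<open>p \<in> P\<close> by (rule ckpt_predE)
  have "e1 \<in> E" "e2 \<in> E" using e1 e2 assms(2,4) unfolding consistent_cut_def by auto
  then consider "e1 = e2" | "(e1, e2) \<in> ord" | "(e2, e1) \<in> ord"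
    using computation_ord_total[OF c] e1 e2 by metis
  then show "\<exists>e\<in>C \<inter> D. proc e = p \<and> (\<forall>f\<in>C \<inter> D. proc f = p \<longrightarrow> f = e \<or> (f, e) \<in> ord) \<and> e \<in> LC"
  proof cases
    case 1
    then show ?thesis using e1 e2 by blast
  next
    case 2
    then have "e1 \<in> D" using computation_ord_cut_closed[OF c assms(4)] e2(1) by blast
    then show ?thesis using e1 by blast
  next
    case 3
    then have "e2 \<in> C" using computation_ord_cut_closed[OF c assms(2)] e1(1) by blast
    then show ?thesis using e2 by blast
  qed
qed

lemma ckpt_cuts_Int_Un:
  assumes c: "computation E R P proc ord M"
    and "consistent_cut E R C" "ckpt_pred P proc ord LC C"
    and "consistent_cut E R D" "ckpt_pred P proc ord LC D"
  shows "consistent_cut E R (C \<inter> D) \<and> ckpt_pred P proc ord LC (C \<inter> D)"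
    and "consistent_cut E R (C \<union> D) \<and> ckpt_pred P proc ord LC (C \<union> D)"
proof -
  have "C \<subseteq> E" "D \<subseteq> E" using assms(2,4) unfolding consistent_cut_def by blast+
  show "consistent_cut E R (C \<inter> D) \<and> ckpt_pred P proc ord LC (C \<inter> D)"
    using consistent_cut_Int[OF assms(2,4)] ckpt_pred_Int[OF assms] ..
  show "consistent_cut E R (C \<union> D) \<and> ckpt_pred P proc ord LC (C \<union> D)"
    using consistent_cut_Un[OF assms(2,4)] ckpt_pred_Un[OF c \<open>C \<subseteq> E\<close> assms(3) \<open>D \<subseteq> E\<close> assms(5)] ..
qed

lemma ckpt_slice_consistent_cuts:
  assumes c: "computation E R P proc ord M" and "is_slice E R (ckpt_pred P proc ord LC) S"
  shows "{C. consistent_cut E S C} =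
    {C. consistent_cut E R C \<and> ckpt_pred P proc ord LC C} \<union> {{}, E}"
proof (rule slice_consistent_cuts[OF computation_order(1)[OF c] assms(2)])
  show "ckpt_pred P proc ord LC (C \<inter> D)" "ckpt_pred P proc ord LC (C \<union> D)"
    if "consistent_cut E R C" "ckpt_pred P proc ord LC C" "consistent_cut E R D" "ckpt_pred P proc ord LC D"
    for C D
    using ckpt_cuts_Int_Un[OF c that] by simp_all
qed

lemma checkpoint_succ_ev:
  assumes c: "computation E R P proc ord M"
    and "LC \<subseteq> E" "LC \<inter> Top E ord = {}" "y \<in> LC"
  shows "y \<notin> Top E ord" "succ_ev ord y \<in> E"
proof -
  show "y \<notin> Top E ord" using assms(3,4) by blast
  then have "(y, succ_ev ord y) \<in> ord" using computation_succ_ev[OF c] assms(2,4) by blast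
  then show "succ_ev ord y \<in> E" using computation_order(2)[OF c] by blast
qed

lemma consistent_in_ckpt_slice:
  assumes c: "computation E R P proc ord M"
    and "LC \<subseteq> E" "LC \<inter> Top E ord = {}" "is_slice E R (ckpt_pred P proc ord LC) S"
    and "y \<in> LC" "consistent_in E ord S x y"
  shows "\<exists>C\<in>{C. consistent_cut E R C \<and> ckpt_pred P proc ord LC C}. x \<in> C \<and> succ_ev ord y \<notin> C"
proof -
  obtain C where C: "consistent_cut E S C" "x \<in> frontier E ord C" "y \<in> frontier E ord C"
    using assms(6) unfolding consistent_in_def by blast
  have "x \<in> C" "succ_ev ord y \<notin> C"
    using C(2,3) checkpoint_succ_ev(1)[OF c assms(2,3,5)] unfolding frontier_def by auto
  moreover have "C \<noteq> {}" "C \<noteq> E"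
    using calculation checkpoint_succ_ev(2)[OF c assms(2,3,5)] by auto
  then have "consistent_cut E R C \<and> ckpt_pred P proc ord LC C"
    using C(1) ckpt_slice_consistent_cuts[OF c assms(4)] by blast
  ultimately show ?thesis by blast
qed

theorem theorem13:
  fixes E :: "'e set" and R ord M S :: "('e \<times> 'e) set"
    and P :: "'p set" and proc :: "'e \<Rightarrow> 'p" and LC X :: "'e set"
  assumes "computation E R P proc ord M"
    and "LC \<subseteq> E" and "LC \<inter> Top E ord = {}"
    and "is_slice E R (ckpt_pred P proc ord LC) S"
    and "X \<subseteq> LC" and "X \<noteq> {}"
  shows "(\<exists>C. consistent_cut E R C \<and> C \<noteq> {} \<and> C \<noteq> E \<and> ckpt_pred P proc ord LC C
              \<and> X \<subseteq> frontier E ord C)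
         \<longleftrightarrow> (\<forall>x\<in>X. \<forall>y\<in>X. consistent_in E ord S x y)"
proof
  assume "\<exists>C. consistent_cut E R C \<and> C \<noteq> {} \<and> C \<noteq> E \<and> ckpt_pred P proc ord LC C
              \<and> X \<subseteq> frontier E ord C"
  then obtain C where "consistent_cut E S C" "X \<subseteq> frontier E ord C"
    using is_slice_consistent_cut[OF assms(4)] by blast
  then show "\<forall>x\<in>X. \<forall>y\<in>X. consistent_in E ord S x y"
    unfolding consistent_in_def by blast
next
  assume pairwise: "\<forall>x\<in>X. \<forall>y\<in>X. consistent_in E ord S x y"
  let ?B = "{C. consistent_cut E R C \<and> ckpt_pred P proc ord LC C}"
  have "X \<subseteq> E" using assms(2,5) by blast
  then have "finite X" using computation_order(1)[OF assms(1)] by (rule finite_subset)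
  moreover have "A \<inter> D \<in> ?B" "A \<union> D \<in> ?B" if "A \<in> ?B" "D \<in> ?B" for A D
    using that ckpt_cuts_Int_Un[OF assms(1), where C = A and D = D and LC = LC] by simp_all
  moreover have "\<exists>C\<in>?B. x \<in> C \<and> succ_ev ord y \<notin> C" if "x \<in> X" "y \<in> X" for x y
    using consistent_in_ckpt_slice[OF assms(1-4) subsetD[OF assms(5) that(2)]] pairwise that
    by blast
  ultimately have "\<exists>C\<in>?B. X \<subseteq> C \<and> (\<forall>y\<in>X. succ_ev ord y \<notin> C)"
    by (rule Union_Inter_separates[OF _ assms(6)])
  then obtain C where C: "C \<in> ?B" "X \<subseteq> C" "\<forall>y\<in>X. succ_ev ord y \<notin> C"
    by blast
  obtain x where "x \<in> X" using assms(6) by blast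
  then have "C \<noteq> {}" "C \<noteq> E"
    using C checkpoint_succ_ev(2)[OF assms(1-3)] assms(5) by blast+
  moreover have "X \<subseteq> frontier E ord C" using C unfolding frontier_def by blast
  ultimately show "\<exists>C. consistent_cut E R C \<and> C \<noteq> {} \<and> C \<noteq> E \<and> ckpt_pred P proc ord LC C
              \<and> X \<subseteq> frontier E ord C"
    using C(1) by blast
qed

end
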